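(* Let $\Omega\subset\mathbb{R}^3$ be the unit ball. For $r_1\in(0,1)$, $\sigma_1>0$ let $R_{\sigma_1,r_1}:H^{-1/2}(\partial\Omega)\to H^{1/2}(\partial\Omega)$ be the Neumann-to-Dirichlet map of the three-dimensional core-shell problem and $R$ the Neumann-to-Dirichlet map of the homogeneous ball problem (defined in the context). Then: (1) for any fixed $r_1\in(0,1)$, $\|R_{\sigma_1,r_1}-R\|\to0$ as $\sigma_1\to1$; (2) for any fixed $\sigma_1>0$, $\|R_{\sigma_1,r_1}-R\|\to0$ as $r_1\to0$. Here $\|\cdot\|$ is the operator norm from $H^{-1/2}(\partial\Omega)$ to $H^{1/2}(\partial\Omega)$.
   Context: Spherical coordinates $(r,\theta,\phi)$, $\mu=\cos\theta$. $I_{n+1/2},K_{n+1/2}$ are modified Bessel functions of first and second kind of order $n+\tfrac12$; $P_n^{|m|}$ are associated Legendre functions; $g_{nm}=(g,P_n^{|m|}(\mu)e^{im\phi})$ for $n\ge0$, $|m|\le n$. Let $\Delta$ denote the Laplacian in $\mathbb{R}^3$. Core-shell problem: given $r_1,\sigma_1$ and $g\in H^{-1/2}(\partial\Omega)$, $\psi$ solves $\Delta\psi-\sigma_1^{-1}\psi=0$ in $r<r_1$, $\Delta\psi-\psi=0$ in $r_1<r<1$, $\psi|_{r=r_1}^+=\psi|_{r=r_1}^-$, $\partial_r\psi|_{r=r_1}^+=\sigma_1\partial_r\psi|_{r=r_1}^-$ ($\pm$ = limits from outside/inside the sphere $r=r_1$), $\partial_r\psi|_{r=1}=g$, $\psi$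 bounded at $r=0$ and as $\mu\to\pm1$; $R_{\sigma_1,r_1}(g)=\psi|_{r=1}$. Explicitly $R_{\sigma_1,r_1}(g)=\sum_{n\ge0}\sum_{m=-n}^n\frac{\rho_nK_{n+1/2}(1)-I_{n+1/2}(1)}{\rho_nK_{n+1/2}'(1)-I_{n+1/2}'(1)}g_{nm}P_n^{|m|}(\mu)e^{im\phi}$, with $\rho_n=\frac{\sigma_1I_{n+1/2}'(r_1/\sqrt{\sigma_1})I_{n+1/2}(r_1)-I_{n+1/2}(r_1/\sqrt{\sigma_1})I_{n+1/2}'(r_1)}{\sigma_1I_{n+1/2}'(r_1/\sqrt{\sigma_1})K_{n+1/2}(r_1)-I_{n+1/2}(r_1/\sqrt{\sigma_1})K_{n+1/2}'(r_1)}$. Homogeneous problem: $\Delta\Psi-\Psi=0$ in $r<1$, $\partial_r\Psi|_{r=1}=g$, $\Psi$ bounded at $0$; $R(g)=\Psi|_{r=1}=\sum_{n\ge0}\sum_{m=-n}^n\frac{I_{n+1/2}(1)}{I_{n+1/2}'(1)}g_{nm}P_n^{|m|}(\mu)e^{im\phi}$. *)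

theory Defs
  imports "HOL-Analysis.Analysis"
begin

definition besselI :: "real \<Rightarrow> real \<Rightarrow> real" where
  "besselI \<nu> x = (\<Sum>k. (x / 2) powr (2 * real k + \<nu>) / (fact k * Gamma (real k + \<nu> + 1)))"

text \<open>K_nu(x) = (pi/2) (I_{-nu}(x) - I_nu(x)) / sin(nu pi), valid for non-integer nu
  (in particular nu = n + 1/2).\<close>
definition besselK :: "real \<Rightarrow> real \<Rightarrow> real" where
  "besselK \<nu> x = pi / 2 * (besselI (- \<nu>) x - besselI \<nu> x) / sin (\<nu> * pi)"

abbreviation In :: "nat \<Rightarrow> real \<Rightarrow> real" where "In n \<equiv> besselI (real n + 1/2)"
abbreviation Kn :: "nat \<Rightarrow> real \<Rightarrow> real" where "Kn n \<equiv> besselK (real n + 1/2)"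
abbreviation dIn :: "nat \<Rightarrow> real \<Rightarrow> real" where "dIn n x \<equiv> deriv (In n) x"
abbreviation dKn :: "nat \<Rightarrow> real \<Rightarrow> real" where "dKn n x \<equiv> deriv (Kn n) x"

section \<open>Multipliers of the Neumann-to-Dirichlet maps on spherical harmonics of degree n\<close>

definition rho :: "real \<Rightarrow> real \<Rightarrow> nat \<Rightarrow> real" where
  "rho \<sigma>1 r1 n =
     (\<sigma>1 * dIn n (r1 / sqrt \<sigma>1) * In n r1 - In n (r1 / sqrt \<sigma>1) * dIn n r1) /
     (\<sigma>1 * dIn n (r1 / sqrt \<sigma>1) * Kn n r1 - In n (r1 / sqrt \<sigma>1) * dKn n r1)"

definition mult_cs :: "real \<Rightarrow> real \<Rightarrow> nat \<Rightarrow> real" where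
  "mult_cs \<sigma>1 r1 n = (rho \<sigma>1 r1 n * Kn n 1 - In n 1) / (rho \<sigma>1 r1 n * dKn n 1 - dIn n 1)"

definition mult_hom :: "nat \<Rightarrow> real" where
  "mult_hom n = In n 1 / dIn n 1"

text \<open>A function on the sphere is represented by its coefficients c n m (n >= 0, |m| <= n)
  with respect to the (orthonormalised) basis P_n^|m|(mu) e^(i m phi).\<close>
definition sh_idx :: "(nat \<times> int) set" where
  "sh_idx = {(n, m). \<bar>m\<bar> \<le> int n}"

definition sob_weight :: "real \<Rightarrow> nat \<Rightarrow> real" where
  "sob_weight s n = (1 + real n * (real n + 1)) powr s"

definition inH :: "real \<Rightarrow> (nat \<Rightarrow> int \<Rightarrow> complex) \<Rightarrow> bool" where
  "inH s c \<longleftrightarrow> (\<lambda>(n, m). sob_weight s n * (cmod (c n m))\<^sup>2) summable_on sh_idx"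

definition Hnorm :: "real \<Rightarrow> (nat \<Rightarrow> int \<Rightarrow> complex) \<Rightarrow> real" where
  "Hnorm s c = sqrt (\<Sum>\<^sub>\<infinity>(n, m)\<in>sh_idx. sob_weight s n * (cmod (c n m))\<^sup>2)"

definition mult_op :: "(nat \<Rightarrow> real) \<Rightarrow> (nat \<Rightarrow> int \<Rightarrow> complex) \<Rightarrow> (nat \<Rightarrow> int \<Rightarrow> complex)" where
  "mult_op lam c = (\<lambda>n m. complex_of_real (lam n) * c n m)"

definition bounded_op :: "(nat \<Rightarrow> real) \<Rightarrow> bool" where
  "bounded_op lam \<longleftrightarrow> (\<exists>C. \<forall>c. inH (-1/2) c \<longrightarrow>
      inH (1/2) (mult_op lam c) \<and> Hnorm (1/2) (mult_op lam c) \<le> C * Hnorm (-1/2) c)"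

definition op_norm :: "(nat \<Rightarrow> real) \<Rightarrow> real" where
  "op_norm lam = (SUP c\<in>{c. inH (-1/2) c \<and> Hnorm (-1/2) c \<noteq> 0}.
                    Hnorm (1/2) (mult_op lam c) / Hnorm (-1/2) c)"

definition diff_mult :: "real \<Rightarrow> real \<Rightarrow> nat \<Rightarrow> real" where
  "diff_mult \<sigma>1 r1 n = mult_cs \<sigma>1 r1 n - mult_hom n"

end

(*
  Both Neumann-to-Dirichlet maps act diagonally on spherical harmonics, so R_{sigma1,r1} - R is
  the multiplier lambda_n = diff_mult sigma1 r1 n, and its norm from H^{-1/2} to H^{1/2} is at
  most sup_n (n + 1) |lambda_n|.

  With nu = n + 1/2 and 0 < r <= 1, the power series of I_nu and the recurrences of K_nu give
  I_nu(r) <= r^nu I_nu(1), r I_nu'(r) <= r^nu I_nu'(1) and K_nu(1) <= r^nu K_nu(r). Together they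
  bound |rho_n| by t r^(2n+1) I_nu'(1) / (nu K_nu(1)), where t = 1 in general, and t -> 0 as
  sigma1 -> 1 because the numerator of rho_n compares the same power series at r / sqrt sigma1
  and at r. Perturbing the quotient that defines the multiplier then gives
  |lambda_n| <= 16 t r^(2n+1), so (n + 1) |lambda_n| <= 16 t r / (1 - r^2), which tends to 0
  as r -> 0 and, for fixed r, as sigma1 -> 1.
*)

theory Submission
  imports Defs
begin

section \<open>The power series of I\<close>

lemma rGamma_pos: "0 < x \<Longrightarrow> 0 < rGamma (x::real)"
  unfolding rGamma_inverse_Gamma by simp

lemma rGamma_shift_le:
  assumes "1 \<le> x"
  shows "rGamma (x + real n) \<le> rGamma (x::real)"
proof (induction n)
  case (Suc n)
  have "rGamma (x + real n) = (x + real n) * rGamma (x + real (Suc n))"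
    using rGamma_plus1[of "x + real n"] by (simp add: algebra_simps)
  moreover have "0 < rGamma (x + real (Suc n))" using assms by (intro rGamma_pos) simp
  ultimately have "rGamma (x + real (Suc n)) \<le> rGamma (x + real n)"
    using assms by (simp add: mult_le_cancel_right1)
  with Suc.IH show ?case by linarith
qed simp

text \<open>The series behind besselI: besselI \<mu> x = (x/2) powr \<mu> * besselS \<mu> (x^2/4) for x > 0.\<close>

definition besselS_coeff :: "real \<Rightarrow> nat \<Rightarrow> real" where
  "besselS_coeff \<mu> k = rGamma (real k + \<mu> + 1) / fact k"

definition besselS :: "real \<Rightarrow> real \<Rightarrow> real" where
  "besselS \<mu> y = (\<Sum>k. besselS_coeff \<mu> k * y ^ k)"

lemma summable_besselS: "summable (\<lambda>k. besselS_coeff \<mu> k * y ^ k)"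
proof -
  define K where "K = nat \<lceil>\<bar>\<mu>\<bar>\<rceil>"
  define x where "x = real K + \<mu> + 1"
  have x: "1 \<le> x" unfolding x_def K_def by linarith
  have "norm (besselS_coeff \<mu> k * y ^ k) \<le> rGamma x * (inverse (fact k) * \<bar>y\<bar> ^ k)"
    if "K \<le> k" for k
  proof -
    have "real k + \<mu> + 1 = x + real (k - K)" using that unfolding x_def by simp
    then have "\<bar>rGamma (real k + \<mu> + 1)\<bar> \<le> rGamma x"
      using rGamma_shift_le[OF x, of "k - K"] rGamma_pos[of "x + real (k - K)"] x by simp
    then show ?thesis
      unfolding besselS_coeff_def
      by (simp add: abs_mult power_abs divide_inverse mult_right_mono)
  qed
  moreover have "summable (\<lambda>k. rGamma x * (inverse (fact k) * \<bar>y\<bar> ^ k))"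
    by (intro summable_mult summable_exp)
  ultimately show ?thesis by (rule summable_comparison_test'[rotated])
qed

lemma diffs_besselS_coeff: "diffs (besselS_coeff \<mu>) = besselS_coeff (\<mu> + 1)"
proof
  fix k
  show "diffs (besselS_coeff \<mu>) k = besselS_coeff (\<mu> + 1) k"
    by (simp add: diffs_def besselS_coeff_def field_simps del: of_nat_Suc)
      (simp add: algebra_simps)
qed

lemma besselS_has_derivative: "(besselS \<mu> has_real_derivative besselS (\<mu> + 1) y) (at y)"
  using termdiffs_strong_converges_everywhere[OF summable_besselS, of \<mu> y]
  unfolding besselS_def[abs_def] diffs_besselS_coeff by simp

lemma besselS_recurrence: "besselS (\<mu> - 1) y = \<mu> * besselS \<mu> y + y * besselS (\<mu> + 1) y"
proof -
  have shifted: "(\<lambda>k. real k * besselS_coeff \<mu> k * y ^ (k - 1)) sums besselS (\<mu> + 1) y"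
    using diffs_equiv[of "besselS_coeff \<mu>" y]
    unfolding diffs_besselS_coeff besselS_def by (simp add: summable_besselS)
  have "besselS_coeff (\<mu> - 1) k * y ^ k
      = \<mu> * (besselS_coeff \<mu> k * y ^ k) + y * (real k * besselS_coeff \<mu> k * y ^ (k - 1))" for k
  proof -
    have "rGamma (real k + (\<mu> - 1) + 1) = (real k + \<mu>) * rGamma (real k + \<mu> + 1)"
      using rGamma_plus1[of "real k + \<mu>"] by simp
    moreover have "y * y ^ (k - 1) = y ^ k" if "k > 0"
      using that by (simp add: power_eq_if)
    ultimately show ?thesis
      by (cases "k = 0") (auto simp: besselS_coeff_def algebra_simps add_divide_distrib)
  qed
  moreover have "(\<lambda>k. \<mu> * (besselS_coeff \<mu> k * y ^ k)
      + y * (real k * besselS_coeff \<mu> k * y ^ (k - 1)))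
      sums (\<mu> * besselS \<mu> y + y * besselS (\<mu> + 1) y)"
    unfolding besselS_def[of \<mu>]
    by (intro sums_add sums_mult summable_sums summable_besselS shifted)
  ultimately show ?thesis
    unfolding besselS_def[of "\<mu> - 1"] by (simp add: sums_iff)
qed

lemma besselS_coeff_pos: "0 \<le> \<mu> \<Longrightarrow> 0 < besselS_coeff \<mu> k"
  unfolding besselS_coeff_def by (simp add: rGamma_pos)

lemma besselS_coeff_le:
  assumes "0 \<le> \<mu>"
  shows "besselS_coeff \<mu> k \<le> rGamma (\<mu> + 1)"
proof -
  have "rGamma (real k + \<mu> + 1) \<le> rGamma (\<mu> + 1)"
    using rGamma_shift_le[of "\<mu> + 1" k] assms by (simp add: add_ac)
  moreover have "besselS_coeff \<mu> k \<le> rGamma (real k + \<mu> + 1)"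
    using besselS_coeff_pos[OF assms, of k] rGamma_pos[of "real k + \<mu> + 1"] assms
    unfolding besselS_coeff_def by (simp add: divide_le_eq mult_le_cancel_left1)
  ultimately show ?thesis by linarith
qed

lemma besselS_0: "besselS \<mu> 0 = rGamma (\<mu> + 1)"
  unfolding besselS_def powser_zero by (simp add: besselS_coeff_def)

lemma besselS_mono:
  assumes "0 \<le> \<mu>" "0 \<le> y" "y \<le> Y"
  shows "besselS \<mu> y \<le> besselS \<mu> Y"
  unfolding besselS_def
proof (intro suminf_le summable_besselS allI)
  fix k
  show "besselS_coeff \<mu> k * y ^ k \<le> besselS_coeff \<mu> k * Y ^ k"
    using besselS_coeff_pos[OF assms(1), of k] assms(2,3)
    by (simp add: power_mono)
qed

lemma besselS_ge:
  assumes "0 \<le> \<mu>" "0 \<le> y"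
  shows "rGamma (\<mu> + 1) \<le> besselS \<mu> y"
  using besselS_mono[OF assms(1) order_refl assms(2)] by (simp add: besselS_0)

lemma besselS_pos:
  assumes "0 \<le> \<mu>" "0 \<le> y"
  shows "0 < besselS \<mu> y"
  using besselS_ge[OF assms] rGamma_pos[of "\<mu> + 1"] assms(1) by linarith

lemma besselS_le:
  assumes "0 \<le> \<mu>" "0 \<le> y" "y \<le> 1/4"
  shows "besselS \<mu> y \<le> 4/3 * rGamma (\<mu> + 1)"
proof -
  have "besselS \<mu> y \<le> (\<Sum>k. rGamma (\<mu> + 1) * y ^ k)"
    unfolding besselS_def
  proof (intro suminf_le summable_besselS allI)
    show "summable (\<lambda>k. rGamma (\<mu> + 1) * y ^ k)"
      using assms by (intro summable_mult summable_geometric) auto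
    show "besselS_coeff \<mu> k * y ^ k \<le> rGamma (\<mu> + 1) * y ^ k" for k
      using assms besselS_coeff_le[OF assms(1), of k] by (intro mult_right_mono) auto
  qed
  also have "\<dots> = rGamma (\<mu> + 1) * (1 / (1 - y))"
    using assms by (subst suminf_mult[OF summable_geometric]) (auto simp: suminf_geometric)
  also have "\<dots> \<le> rGamma (\<mu> + 1) * (4/3)"
    using assms rGamma_pos[of "\<mu> + 1"] by (intro mult_left_mono) (auto simp: divide_simps)
  finally show ?thesis by simp
qed

lemma besselS_succ_le:
  assumes "0 \<le> \<mu>" "0 \<le> y"
  shows "besselS (\<mu> + 1) y \<le> besselS \<mu> y"
  unfolding besselS_def
proof (intro suminf_le summable_besselS allI)
  fix k
  have "rGamma (real k + \<mu> + 1 + real (1::nat)) \<le> rGamma (real k + \<mu> + 1)"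
    using assms by (intro rGamma_shift_le) simp
  then show "besselS_coeff (\<mu> + 1) k * y ^ k \<le> besselS_coeff \<mu> k * y ^ k"
    unfolding besselS_coeff_def using assms
    by (intro mult_right_mono divide_right_mono) (auto simp: add_ac)
qed

lemma besselS_diff_le:
  assumes "0 \<le> \<mu>" and A: "0 \<le> A" "A \<le> 1/4" and R: "0 \<le> R" "R \<le> 1/4"
  shows "\<bar>besselS \<mu> A - besselS \<mu> R\<bar> \<le> 4/3 * \<bar>A - R\<bar> * besselS \<mu> A"
proof -
  have "norm (besselS \<mu> A - besselS \<mu> R) \<le> 4/3 * rGamma (\<mu> + 1 + 1) * norm (A - R)"
  proof (rule field_differentiable_bound[where S = "{0..1/4}" and f' = "besselS (\<mu> + 1)"])
    fix y :: real assume "y \<in> {0..1/4}"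
    then show "norm (besselS (\<mu> + 1) y) \<le> 4/3 * rGamma (\<mu> + 1 + 1)"
      using assms besselS_le[of "\<mu> + 1" y] besselS_pos[of "\<mu> + 1" y] by simp
  qed (use assms in \<open>auto intro: has_field_derivative_at_within besselS_has_derivative\<close>)
  then have "\<bar>besselS \<mu> A - besselS \<mu> R\<bar> \<le> 4/3 * rGamma (\<mu> + 1 + 1) * \<bar>A - R\<bar>"
    by simp
  also have "\<dots> \<le> 4/3 * besselS \<mu> A * \<bar>A - R\<bar>"
    using besselS_succ_le[OF assms(1), of 0] besselS_ge[OF assms(1) A(1)]
    by (intro mult_right_mono mult_left_mono) (auto simp: besselS_0)
  finally show ?thesis by (simp add: mult_ac)
qed

section \<open>The modified Bessel functions I and K\<close>

lemma besselI_eq_besselS: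
  assumes "0 < x"
  shows "besselI \<mu> x = (x/2) powr \<mu> * besselS \<mu> (x\<^sup>2/4)"
proof -
  have "(x/2) powr (2 * real k + \<mu>) / (fact k * Gamma (real k + \<mu> + 1))
      = (x/2) powr \<mu> * (besselS_coeff \<mu> k * (x\<^sup>2/4) ^ k)" for k
  proof -
    have "(x/2) powr (2 * real k) = (x/2) ^ (2 * k)"
      using powr_realpow[of "x/2" "2 * k"] assms by simp
    then have e: "(x/2) powr (2 * real k + \<mu>) = (x\<^sup>2/4) ^ k * (x/2) powr \<mu>"
      by (simp add: powr_add power_mult power_divide)
    show ?thesis
      unfolding e besselS_coeff_def rGamma_inverse_Gamma by (simp add: field_simps)
  qed
  then show ?thesis
    unfolding besselI_def besselS_def by (simp add: suminf_mult[OF summable_besselS])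
qed

lemma besselI_has_derivative:
  assumes "0 < x"
  shows "(besselI \<mu> has_real_derivative \<mu>/x * besselI \<mu> x + besselI (\<mu> + 1) x) (at x)"
proof -
  have half: "((\<lambda>t. t/2) has_real_derivative 1/2) (at x)"
    and quarter_square: "((\<lambda>t. t\<^sup>2/4) has_real_derivative x/2) (at x)"
    by (auto intro!: derivative_eq_intros)
  have "((\<lambda>t. (t/2) powr \<mu>) has_real_derivative \<mu> * (x/2) powr (\<mu> - 1) * (1/2)) (at x)"
    using DERIV_chain2[OF has_real_derivative_powr half] assms by simp
  moreover have "((\<lambda>t. besselS \<mu> (t\<^sup>2/4)) has_real_derivative
      besselS (\<mu> + 1) (x\<^sup>2/4) * (x/2)) (at x)"
    by (rule DERIV_chain2[OF besselS_has_derivative quarter_square])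
  ultimately have "((\<lambda>t. (t/2) powr \<mu> * besselS \<mu> (t\<^sup>2/4)) has_real_derivative
      \<mu> * (x/2) powr (\<mu> - 1) * (1/2) * besselS \<mu> (x\<^sup>2/4)
      + besselS (\<mu> + 1) (x\<^sup>2/4) * (x/2) * (x/2) powr \<mu>) (at x)"
    by (rule DERIV_mult)
  also have "\<mu> * (x/2) powr (\<mu> - 1) * (1/2) * besselS \<mu> (x\<^sup>2/4)
      + besselS (\<mu> + 1) (x\<^sup>2/4) * (x/2) * (x/2) powr \<mu>
      = \<mu>/x * besselI \<mu> x + besselI (\<mu> + 1) x"
    using assms
    by (simp add: besselI_eq_besselS powr_diff powr_add) (simp add: field_simps)
  finally show ?thesis
    by (rule has_field_derivative_transform_within_open[where S = "{0<..}"])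
      (use assms in \<open>simp_all add: besselI_eq_besselS\<close>)
qed

lemma besselI_recurrence:
  assumes "0 < x"
  shows "besselI (\<mu> - 1) x = 2*\<mu>/x * besselI \<mu> x + besselI (\<mu> + 1) x"
proof -
  have "(x/2) powr (\<mu> - 1) = (x/2) powr \<mu> * (2/x)" "(x/2) powr (\<mu> + 1) = (x/2) powr \<mu> * (x/2)"
    using assms by (simp_all add: powr_diff powr_add)
  then show ?thesis
    using assms
    by (simp add: besselI_eq_besselS besselS_recurrence) (simp add: field_simps power2_eq_square)
qed

lemma besselI_pos: "0 < x \<Longrightarrow> 0 \<le> \<mu> \<Longrightarrow> 0 < besselI \<mu> x"
  by (simp add: besselI_eq_besselS besselS_pos)

lemma deriv_besselI: "0 < x \<Longrightarrow> deriv (besselI \<mu>) x = \<mu>/x * besselI \<mu> x + besselI (\<mu> + 1) x"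
  by (rule DERIV_imp_deriv[OF besselI_has_derivative])

lemma deriv_besselI_ge:
  assumes "0 < x" "0 \<le> \<mu>"
  shows "\<mu>/x * besselI \<mu> x \<le> deriv (besselI \<mu>) x"
  using besselI_pos[of x "\<mu> + 1"] assms by (simp add: deriv_besselI)

lemma deriv_besselI_pos:
  assumes "0 < x" "0 \<le> \<mu>"
  shows "0 < deriv (besselI \<mu>) x"
proof -
  have "0 \<le> \<mu>/x * besselI \<mu> x" using assms besselI_pos[of x \<mu>] by simp
  then show ?thesis using besselI_pos[of x "\<mu> + 1"] assms by (simp add: deriv_besselI)
qed

lemma deriv_besselI_eq_besselS:
  assumes "0 < x"
  shows "deriv (besselI \<mu>) x
    = (x/2) powr \<mu> * (\<mu>/x * besselS \<mu> (x\<^sup>2/4) + x/2 * besselS (\<mu> + 1) (x\<^sup>2/4))"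
proof -
  have "(x/2) powr (\<mu> + 1) = (x/2) powr \<mu> * (x/2)"
    using assms by (simp add: powr_add)
  then show ?thesis
    using assms by (simp add: deriv_besselI besselI_eq_besselS algebra_simps)
qed

lemma powr_divide_2: "0 \<le> (r::real) \<Longrightarrow> (r/2) powr \<mu> = r powr \<mu> * (1/2) powr \<mu>"
  using powr_mult[of r "1/2" \<mu>] by simp

lemma besselI_le_powr:
  assumes "0 \<le> \<mu>" "0 < r" "r \<le> 1"
  shows "besselI \<mu> r \<le> r powr \<mu> * besselI \<mu> 1"
proof -
  have "besselS \<mu> (r\<^sup>2/4) \<le> besselS \<mu> (1/4)"
    using assms by (intro besselS_mono) (auto simp: power_le_one)
  then show ?thesis
    using assms by (simp add: besselI_eq_besselS powr_divide_2[of r])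
qed

lemma deriv_besselI_le_powr:
  assumes "0 \<le> \<mu>" "0 < r" "r \<le> 1"
  shows "r * deriv (besselI \<mu>) r \<le> r powr \<mu> * deriv (besselI \<mu>) 1"
proof -
  have "r\<^sup>2 \<le> 1" using assms by (simp add: power_le_one)
  then have "\<mu> * besselS \<mu> (r\<^sup>2/4) + r\<^sup>2/2 * besselS (\<mu> + 1) (r\<^sup>2/4)
      \<le> \<mu> * besselS \<mu> (1/4) + 1/2 * besselS (\<mu> + 1) (1/4)"
    using assms besselS_pos[of "\<mu> + 1" "r\<^sup>2/4"]
    by (intro add_mono mult_left_mono mult_mono besselS_mono) auto
  moreover have "r * deriv (besselI \<mu>) r
      = r powr \<mu> * (1/2) powr \<mu> * (\<mu> * besselS \<mu> (r\<^sup>2/4) + r\<^sup>2/2 * besselS (\<mu> + 1) (r\<^sup>2/4))"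
    using assms
    by (simp add: deriv_besselI_eq_besselS powr_divide_2[of r] field_simps power2_eq_square)
  moreover have "deriv (besselI \<mu>) 1
      = (1/2) powr \<mu> * (\<mu> * besselS \<mu> (1/4) + 1/2 * besselS (\<mu> + 1) (1/4))"
    by (simp add: deriv_besselI_eq_besselS)
  ultimately show ?thesis
    using assms by (simp add: mult.assoc)
qed

lemma sin_shift_pi: "sin ((\<nu> - 1) * pi) = - sin (\<nu> * pi)" "sin ((\<nu> + 1) * pi) = - sin (\<nu> * pi)"
  by (simp_all add: ring_distribs)

lemma besselK_has_derivative:
  assumes "0 < x"
  shows "(besselK \<nu> has_real_derivative - besselK (\<nu> - 1) x - \<nu>/x * besselK \<nu> x) (at x)"
proof -
  have "(besselK \<nu> has_real_derivative pi / 2 *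
      ((- \<nu>/x * besselI (- \<nu>) x + besselI (- \<nu> + 1) x) - (\<nu>/x * besselI \<nu> x + besselI (\<nu> + 1) x))
      / sin (\<nu> * pi)) (at x)"
    unfolding besselK_def[abs_def]
    by (intro DERIV_cdivide DERIV_cmult DERIV_diff besselI_has_derivative assms)
  also have "pi / 2 *
      ((- \<nu>/x * besselI (- \<nu>) x + besselI (- \<nu> + 1) x) - (\<nu>/x * besselI \<nu> x + besselI (\<nu> + 1) x))
      / sin (\<nu> * pi) = - besselK (\<nu> - 1) x - \<nu>/x * besselK \<nu> x"
    unfolding besselK_def sin_shift_pi minus_diff_eq besselI_recurrence[OF assms, of \<nu>]
    using assms by (cases "sin (\<nu> * pi) = 0") (simp_all add: field_simps)
  finally show ?thesis .
qed

lemma besselK_recurrence: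
  assumes "0 < x"
  shows "besselK (\<nu> + 1) x = besselK (\<nu> - 1) x + 2*\<nu>/x * besselK \<nu> x"
proof -
  have e: "- (\<nu> - 1) = - \<nu> + 1" "- (\<nu> + 1) = - \<nu> - 1" by simp_all
  show ?thesis
    unfolding besselK_def sin_shift_pi e besselI_recurrence[OF assms]
    using assms by (cases "sin (\<nu> * pi) = 0") (simp_all add: field_simps)
qed

lemma besselK_minus: "besselK (- \<nu>) x = besselK \<nu> x"
  unfolding besselK_def by (simp add: divide_simps right_diff_distrib)

lemma besselK_half_pos:
  assumes "0 < x" "x \<le> 1"
  shows "0 < besselK (1/2) x"
proof -
  define y where "y = x\<^sup>2/4"
  have y: "0 < y" using assms by (simp add: y_def)
  define t where "t = (\<lambda>k. besselS_coeff (1/2) k * (real k + 1/2 - x/2) * y ^ k)"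
  have t: "besselS_coeff (-1/2) k * y ^ k - x/2 * (besselS_coeff (1/2) k * y ^ k) = t k" for k
  proof -
    have "rGamma (real k + -1/2 + 1) = (real k + 1/2) * rGamma (real k + 1/2 + 1)"
      using rGamma_plus1[of "real k + 1/2"] by (simp add: add_ac)
    then show ?thesis
      unfolding t_def besselS_coeff_def
      by (simp add: algebra_simps diff_divide_distrib add_divide_distrib)
  qed
  have "(\<lambda>k. besselS_coeff (-1/2) k * y ^ k - x/2 * (besselS_coeff (1/2) k * y ^ k))
      sums (besselS (-1/2) y - x/2 * besselS (1/2) y)"
    unfolding besselS_def by (intro sums_diff sums_mult summable_sums summable_besselS)
  then have "t sums (besselS (-1/2) y - x/2 * besselS (1/2) y)"
    unfolding t .
  moreover have "0 < suminf t"
  proof (rule suminf_pos2[of _ 1])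
    show "summable t" using calculation by (rule sums_summable)
    show "0 \<le> t k" for k
      unfolding t_def using besselS_coeff_pos[of "1/2" k] assms y by simp
    show "0 < t 1"
      unfolding t_def using besselS_coeff_pos[of "1/2" 1] assms y by simp
  qed
  ultimately have pos: "0 < besselS (-1/2) y - x/2 * besselS (1/2) y"
    by (simp add: sums_iff)
  have "(x/2) powr (1/2) = (x/2) powr (-1/2) * (x/2)"
    using assms powr_add[of "x/2" "-1/2" 1] by simp
  then have K: "besselK (1/2) x
      = pi/2 * (x/2) powr (-1/2) * (besselS (-1/2) y - x/2 * besselS (1/2) y)"
    using assms by (simp add: besselK_def besselI_eq_besselS y_def algebra_simps)
  show ?thesis
    unfolding K using pos assms by (intro mult_pos_pos) auto
qed

lemma besselK_half_int_pos_mono: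
  assumes "0 < x" "x \<le> 1"
  shows "0 < besselK (real n - 1/2) x \<and> besselK (real n - 1/2) x \<le> besselK (real n + 1/2) x"
proof (induction n)
  case 0
  show ?case
    using besselK_half_pos[OF assms] besselK_minus[of "1/2" x] by simp
next
  case (Suc n)
  define \<nu> where "\<nu> = real n + 1/2"
  have pos: "0 < besselK (\<nu> - 1) x" "0 < besselK \<nu> x"
    using Suc.IH unfolding \<nu>_def by (simp_all add: algebra_simps)
  have "1 \<le> 2*\<nu>/x" using assms by (simp add: \<nu>_def field_simps)
  then have "besselK \<nu> x \<le> 2*\<nu>/x * besselK \<nu> x"
    using pos(2) mult_right_mono[of 1 "2*\<nu>/x" "besselK \<nu> x"] by simp
  then have "besselK \<nu> x \<le> besselK (\<nu> + 1) x"
    using besselK_recurrence[OF assms(1), of \<nu>] pos(1) by linarith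
  then show ?case
    using pos(2) unfolding \<nu>_def by (simp add: algebra_simps)
qed

lemma besselK_pos: "0 < x \<Longrightarrow> x \<le> 1 \<Longrightarrow> 0 < Kn n x"
  using besselK_half_int_pos_mono[of x "Suc n"] by (simp add: algebra_simps)

lemma besselK_pred_pos: "0 < x \<Longrightarrow> x \<le> 1 \<Longrightarrow> 0 < besselK (real n + 1/2 - 1) x"
  using besselK_half_int_pos_mono[of x n] by (simp add: algebra_simps)

lemma besselK_pred_le: "0 < x \<Longrightarrow> x \<le> 1 \<Longrightarrow> besselK (real n + 1/2 - 1) x \<le> Kn n x"
  using besselK_half_int_pos_mono[of x n] by (simp add: algebra_simps)

lemma deriv_besselK:
  "0 < x \<Longrightarrow> dKn n x = - besselK (real n + 1/2 - 1) x - (real n + 1/2)/x * Kn n x"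
  by (rule DERIV_imp_deriv[OF besselK_has_derivative])

lemma deriv_besselK_le:
  "0 < x \<Longrightarrow> x \<le> 1 \<Longrightarrow> (real n + 1/2)/x * Kn n x \<le> - dKn n x"
  using deriv_besselK[of x n] besselK_pred_pos[of x n] by simp

lemma deriv_besselK_ge_at_1: "- dKn n 1 \<le> (real n + 3/2) * Kn n 1"
  using deriv_besselK[of 1 n] besselK_pred_le[of 1 n] by (simp add: algebra_simps)

lemma besselK_1_le_powr:
  assumes "0 < r" "r \<le> 1"
  shows "Kn n 1 \<le> r powr (real n + 1/2) * Kn n r"
proof -
  define \<nu> where "\<nu> = real n + 1/2"
  have "1 powr \<nu> * besselK \<nu> 1 \<le> r powr \<nu> * besselK \<nu> r"
  proof (rule DERIV_nonpos_imp_nonincreasing[where f = "\<lambda>t. t powr \<nu> * besselK \<nu> t"])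
    fix t assume t: "r \<le> t" "t \<le> 1"
    then have "0 < t" using assms by simp
    then have "((\<lambda>t. t powr \<nu> * besselK \<nu> t) has_real_derivative
        \<nu> * t powr (\<nu> - 1) * besselK \<nu> t + (- besselK (\<nu> - 1) t - \<nu>/t * besselK \<nu> t) * t powr \<nu>)
        (at t)"
      by (intro DERIV_mult has_real_derivative_powr besselK_has_derivative)
    also have "\<nu> * t powr (\<nu> - 1) * besselK \<nu> t
        + (- besselK (\<nu> - 1) t - \<nu>/t * besselK \<nu> t) * t powr \<nu>
        = - (t powr \<nu> * besselK (\<nu> - 1) t)"
      using \<open>0 < t\<close> by (simp add: powr_diff field_simps)
    finally show "\<exists>y. ((\<lambda>t. t powr \<nu> * besselK \<nu> t) has_real_derivative y) (at t) \<and> y \<le> 0"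
      using besselK_pred_pos[of t n] t \<open>0 < t\<close> unfolding \<nu>_def by fastforce
  qed (rule assms(2))
  then show ?thesis unfolding \<nu>_def by simp
qed

section \<open>Bounds on rho_n and on the multiplier\<close>

definition rho_scale :: "real \<Rightarrow> nat \<Rightarrow> real" where
  "rho_scale r n = r ^ (2*n + 1) * dIn n 1 / ((real n + 1/2) * Kn n 1)"

lemma rho_scale_nonneg: "0 \<le> r \<Longrightarrow> 0 \<le> rho_scale r n"
  unfolding rho_scale_def
  using besselK_pos[of 1 n] deriv_besselI_pos[of 1 "real n + 1/2"] by simp

lemma powr_half_int_square:
  assumes "0 < (r::real)"
  shows "(r powr (real n + 1/2))\<^sup>2 = r ^ (2*n + 1)"
proof -
  have "(r powr (real n + 1/2))\<^sup>2 = r powr (real n + 1/2) * r powr (real n + 1/2)"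
    by (simp add: power2_eq_square)
  also have "\<dots> = r powr real (2*n + 1)"
    by (simp add: powr_add[symmetric] add.commute)
  also have "\<dots> = r ^ (2*n + 1)"
    using assms by (rule powr_realpow)
  finally show ?thesis .
qed

lemma besselI_le_rho_scale:
  assumes r: "0 < r" "r \<le> 1"
  shows "In n r \<le> rho_scale r n * Kn n r" and "dIn n r \<le> rho_scale r n * - dKn n r"
proof -
  define \<nu> where "\<nu> = real n + 1/2"
  define p where "p = r powr \<nu>"
  define m where "m = rho_scale r n"
  have p: "0 < p" unfolding p_def using r by simp
  have \<nu>: "1/2 \<le> \<nu>" unfolding \<nu>_def by simp
  have K1: "0 < besselK \<nu> 1" and dI1: "0 < deriv (besselI \<nu>) 1"
    using besselK_pos[of 1 n] deriv_besselI_pos[of 1 \<nu>] \<nu> unfolding \<nu>_def by simp_all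
  have m: "m = p * (p * deriv (besselI \<nu>) 1 / (\<nu> * besselK \<nu> 1))"
    using powr_half_int_square[OF r(1), of n] unfolding m_def rho_scale_def p_def \<nu>_def
    by (simp add: power2_eq_square)
  have "besselK \<nu> 1 \<le> p * besselK \<nu> r"
    using besselK_1_le_powr[OF r, of n] unfolding p_def \<nu>_def .
  then have key: "p * deriv (besselI \<nu>) 1 / \<nu> \<le> m * besselK \<nu> r"
    unfolding m using p dI1 K1 \<nu> by (simp add: field_simps mult_left_mono)
  have m0: "0 \<le> m" unfolding m using p dI1 K1 \<nu> by simp
  have "besselI \<nu> r \<le> p * besselI \<nu> 1"
    using besselI_le_powr[OF _ r, of \<nu>] \<nu> unfolding p_def by simp
  also have "\<dots> \<le> p * deriv (besselI \<nu>) 1 / \<nu>"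
    using deriv_besselI_ge[of 1 \<nu>] p \<nu> by (simp add: field_simps)
  also note key
  finally show "In n r \<le> rho_scale r n * Kn n r"
    unfolding m_def \<nu>_def .
  have "deriv (besselI \<nu>) r \<le> \<nu>/r * (p * deriv (besselI \<nu>) 1 / \<nu>)"
    using deriv_besselI_le_powr[OF _ r, of \<nu>] \<nu> r unfolding p_def by (simp add: field_simps)
  also have "\<dots> \<le> \<nu>/r * (m * besselK \<nu> r)"
    using key \<nu> r by (intro mult_left_mono) auto
  also have "\<dots> = m * (\<nu>/r * besselK \<nu> r)"
    by simp
  also have "\<dots> \<le> m * - deriv (besselK \<nu>) r"
    using deriv_besselK_le[OF r, of n] m0 unfolding \<nu>_def by (intro mult_left_mono) auto
  finally show "dIn n r \<le> rho_scale r n * - dKn n r"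
    unfolding m_def \<nu>_def .
qed

lemma rho_denominator_ge:
  assumes "0 < \<sigma>" "0 < r" "r \<le> 1"
  defines "a \<equiv> r / sqrt \<sigma>"
  shows "0 < In n a * - dKn n r"
    and "In n a * - dKn n r \<le> \<sigma> * dIn n a * Kn n r - In n a * dKn n r"
proof -
  have a: "0 < a" unfolding a_def using assms by simp
  have "0 < (real n + 1/2) / r * Kn n r"
    using assms besselK_pos[of r n] by simp
  then have "0 < - dKn n r"
    using deriv_besselK_le[of r n] assms by linarith
  then show "0 < In n a * - dKn n r"
    using besselI_pos[OF a, of "real n + 1/2"] by (intro mult_pos_pos) auto
  show "In n a * - dKn n r \<le> \<sigma> * dIn n a * Kn n r - In n a * dKn n r"
    using deriv_besselI_pos[OF a, of "real n + 1/2"] besselK_pos[of r n] assms by simp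
qed

lemma abs_rho_le:
  assumes "0 < \<sigma>" "0 < r" "r \<le> 1"
    and "\<bar>\<sigma> * dIn n (r / sqrt \<sigma>) * In n r - In n (r / sqrt \<sigma>) * dIn n r\<bar>
      \<le> c * (\<sigma> * dIn n (r / sqrt \<sigma>) * Kn n r - In n (r / sqrt \<sigma>) * dKn n r)"
  shows "\<bar>rho \<sigma> r n\<bar> \<le> c"
  using rho_denominator_ge[OF assms(1-3), of n] assms(4)
  by (simp add: rho_def abs_div pos_divide_le_eq)

lemma abs_rho_le_rho_scale:
  assumes "0 < \<sigma>" "0 < r" "r \<le> 1"
  shows "\<bar>rho \<sigma> r n\<bar> \<le> rho_scale r n"
proof (rule abs_rho_le[OF assms])
  define a where "a = r / sqrt \<sigma>"
  define m where "m = rho_scale r n"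
  have a: "0 < a" unfolding a_def using assms by simp
  have "\<bar>\<sigma> * dIn n a * In n r - In n a * dIn n r\<bar> \<le> \<sigma> * dIn n a * In n r + In n a * dIn n r"
    using assms deriv_besselI_pos[OF a, of "real n + 1/2"] besselI_pos[OF a, of "real n + 1/2"]
      besselI_pos[of r "real n + 1/2"] deriv_besselI_pos[of r "real n + 1/2"]
    by (intro abs_diff_le_iff[THEN iffD2]) auto
  also have "\<dots> \<le> \<sigma> * dIn n a * (m * Kn n r) + In n a * (m * - dKn n r)"
    using assms deriv_besselI_pos[OF a, of "real n + 1/2"] besselI_pos[OF a, of "real n + 1/2"]
      besselI_le_rho_scale[of r n] unfolding m_def
    by (intro add_mono mult_left_mono) auto
  finally show "\<bar>\<sigma> * dIn n a * In n r - In n a * dIn n r\<bar>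
      \<le> m * (\<sigma> * dIn n a * Kn n r - In n a * dKn n r)"
    by (simp add: algebra_simps)
qed

lemma two_point_cross_bound:
  fixes \<nu> \<sigma> a r SA SR TA TR c :: real
  assumes \<nu>: "1/2 \<le> \<nu>" and ar: "0 < a" "0 < r" "r \<le> 1" and c: "0 \<le> c"
    and T: "0 \<le> TA" "TA \<le> SA" "0 \<le> TR" "TR \<le> SR"
    and dS: "\<bar>SA - SR\<bar> \<le> c * SA" and dT: "\<bar>TA - TR\<bar> \<le> c * SA"
  shows "\<bar>\<sigma> * (\<nu>/a * SA + a/2 * TA) * SR - SA * (\<nu>/r * SR + r/2 * TR)\<bar>
    \<le> \<nu> * SA * SR * (\<bar>\<sigma>/a - 1/r\<bar> + \<bar>\<sigma> * a - r\<bar> + 2 * c)"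
proof -
  define P where "P = SA * SR"
  have P: "0 \<le> P" unfolding P_def using T by simp
  define t1 where "t1 = \<nu> * P * (\<sigma>/a - 1/r)"
  define t2 where "t2 = (\<sigma> * a - r)/2 * (TA * SR)"
  define t3 where "t3 = r/2 * ((TA - TR) * SR + TR * (SR - SA))"
  have "\<sigma> * (\<nu>/a * SA + a/2 * TA) * SR - SA * (\<nu>/r * SR + r/2 * TR) = t1 + t2 + t3"
    unfolding t1_def t2_def t3_def P_def using ar by (simp add: field_simps)
  then have "\<bar>\<sigma> * (\<nu>/a * SA + a/2 * TA) * SR - SA * (\<nu>/r * SR + r/2 * TR)\<bar> \<le> \<bar>t1\<bar> + \<bar>t2\<bar> + \<bar>t3\<bar>"
    using abs_triangle_ineq[of "t1 + t2" t3] abs_triangle_ineq[of t1 t2] by linarith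
  also have "\<bar>t1\<bar> = \<nu> * P * \<bar>\<sigma>/a - 1/r\<bar>"
    unfolding t1_def using \<nu> P by (simp add: abs_mult)
  also have "\<bar>t2\<bar> \<le> \<nu> * P * \<bar>\<sigma> * a - r\<bar>"
  proof -
    have "TA * SR \<le> P" unfolding P_def using T by (intro mult_right_mono) auto
    then have "\<bar>t2\<bar> \<le> \<bar>\<sigma> * a - r\<bar> / 2 * P"
      unfolding t2_def using T by (simp add: abs_mult mult_left_mono)
    also have "\<dots> \<le> \<nu> * P * \<bar>\<sigma> * a - r\<bar>"
      using mult_right_mono[OF \<nu>, of "P * \<bar>\<sigma> * a - r\<bar>"] P by (simp add: mult_ac)
    finally show ?thesis .
  qed
  also have "\<bar>t3\<bar> \<le> \<nu> * P * (2 * c)"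
  proof -
    have "\<bar>(TA - TR) * SR + TR * (SR - SA)\<bar> \<le> \<bar>(TA - TR) * SR\<bar> + \<bar>TR * (SR - SA)\<bar>"
      by (rule abs_triangle_ineq)
    also have "\<dots> \<le> c * SA * SR + SR * (c * SA)"
      using dS dT T
      by (intro add_mono) (auto simp: abs_mult abs_minus_commute intro: mult_mono mult_right_mono)
    also have "\<dots> = 2 * c * P" unfolding P_def by simp
    finally have "\<bar>t3\<bar> \<le> r/2 * (2 * c * P)"
      unfolding t3_def using ar by (simp add: abs_mult mult_left_mono)
    also have "\<dots> \<le> \<nu> * P * (2 * c)"
      using mult_right_mono[of r "2 * \<nu>" "c * P"] ar \<nu> c P by (simp add: mult_ac)
    finally show ?thesis .
  qed
  finally show ?thesis
    unfolding P_def by (simp add: algebra_simps)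
qed

text \<open>The left-hand side is the numerator of rho divided by (a/2) powr \<nu> * (r/2) powr \<nu>,
  where a = r / sqrt \<sigma>; the right-hand side vanishes at \<sigma> = 1.\<close>

lemma besselS_cross_bound:
  assumes \<nu>: "1/2 \<le> \<nu>" and a: "0 < a" "a \<le> 1" and r: "0 < r" "r \<le> 1"
  defines "SA \<equiv> besselS \<nu> (a\<^sup>2/4)" and "SR \<equiv> besselS \<nu> (r\<^sup>2/4)"
    and "TA \<equiv> besselS (\<nu> + 1) (a\<^sup>2/4)" and "TR \<equiv> besselS (\<nu> + 1) (r\<^sup>2/4)"
  shows "\<bar>\<sigma> * (\<nu>/a * SA + a/2 * TA) * SR - SA * (\<nu>/r * SR + r/2 * TR)\<bar>
    \<le> \<nu> * SA * SR * (\<bar>\<sigma>/a - 1/r\<bar> + \<bar>\<sigma> * a - r\<bar> + \<bar>a\<^sup>2 - r\<^sup>2\<bar>)"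
proof -
  define c where "c = \<bar>a\<^sup>2 - r\<^sup>2\<bar> / 2"
  have A: "0 \<le> a\<^sup>2/4" "a\<^sup>2/4 \<le> 1/4" and R: "0 \<le> r\<^sup>2/4" "r\<^sup>2/4 \<le> 1/4"
    using a r by (simp_all add: power_le_one)
  have c: "4/3 * \<bar>a\<^sup>2/4 - r\<^sup>2/4\<bar> \<le> c"
    unfolding c_def diff_divide_distrib[symmetric] by simp
  have T: "0 \<le> TA" "TA \<le> SA" "0 \<le> TR" "TR \<le> SR"
    unfolding SA_def SR_def TA_def TR_def
    using \<nu> A R besselS_pos[of "\<nu> + 1"] besselS_succ_le[of \<nu>] by (auto simp: less_imp_le)
  have "\<bar>SA - SR\<bar> \<le> 4/3 * \<bar>a\<^sup>2/4 - r\<^sup>2/4\<bar> * SA"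
    unfolding SA_def SR_def using \<nu> by (intro besselS_diff_le A R) simp
  also have "\<dots> \<le> c * SA"
    using c T by (intro mult_right_mono) auto
  finally have dS: "\<bar>SA - SR\<bar> \<le> c * SA" .
  have "\<bar>TA - TR\<bar> \<le> 4/3 * \<bar>a\<^sup>2/4 - r\<^sup>2/4\<bar> * TA"
    unfolding TA_def TR_def using \<nu> by (intro besselS_diff_le A R) simp
  also have "\<dots> \<le> c * SA"
    using c T by (intro mult_mono) (auto simp: c_def)
  finally have dT: "\<bar>TA - TR\<bar> \<le> c * SA" .
  show ?thesis
    using two_point_cross_bound[OF \<nu> a(1) r _ T dS dT] unfolding c_def by simp
qed

definition rho_defect :: "real \<Rightarrow> real \<Rightarrow> real" where
  "rho_defect \<sigma> r = \<bar>\<sigma> / (r / sqrt \<sigma>) - 1/r\<bar> + \<bar>\<sigma> * (r / sqrt \<sigma>) - r\<bar> + \<bar>(r / sqrt \<sigma>)\<^sup>2 - r\<^sup>2\<bar>"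

lemma rho_defect_nonneg: "0 \<le> rho_defect \<sigma> r"
  unfolding rho_defect_def by simp

lemma rho_numerator_le_defect:
  assumes "0 < \<sigma>" "0 < r" "r \<le> 1" "r / sqrt \<sigma> \<le> 1"
  defines "a \<equiv> r / sqrt \<sigma>"
  shows "\<bar>\<sigma> * dIn n a * In n r - In n a * dIn n r\<bar>
    \<le> rho_defect \<sigma> r * (real n + 1/2) * In n a * In n r"
proof -
  define \<nu> where "\<nu> = real n + 1/2"
  define SA where "SA = besselS \<nu> (a\<^sup>2/4)"
  define SR where "SR = besselS \<nu> (r\<^sup>2/4)"
  define TA where "TA = besselS (\<nu> + 1) (a\<^sup>2/4)"
  define TR where "TR = besselS (\<nu> + 1) (r\<^sup>2/4)"
  have a: "0 < a" "a \<le> 1" unfolding a_def using assms by simp_all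
  have Ia: "In n a = (a/2) powr \<nu> * SA" and Ir: "In n r = (r/2) powr \<nu> * SR"
    using besselI_eq_besselS a assms unfolding SA_def SR_def \<nu>_def by simp_all
  have dIa: "dIn n a = (a/2) powr \<nu> * (\<nu>/a * SA + a/2 * TA)"
    and dIr: "dIn n r = (r/2) powr \<nu> * (\<nu>/r * SR + r/2 * TR)"
    using deriv_besselI_eq_besselS a assms unfolding SA_def SR_def TA_def TR_def \<nu>_def by simp_all
  have "\<sigma> * dIn n a * In n r - In n a * dIn n r = (a/2) powr \<nu> * (r/2) powr \<nu> *
      (\<sigma> * (\<nu>/a * SA + a/2 * TA) * SR - SA * (\<nu>/r * SR + r/2 * TR))"
    unfolding Ia Ir dIa dIr by (simp add: algebra_simps)
  also have "\<bar>\<dots>\<bar> \<le> (a/2) powr \<nu> * (r/2) powr \<nu> * (\<nu> * SA * SR * rho_defect \<sigma> r)"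
    using besselS_cross_bound[of \<nu> a r \<sigma>] a assms
    unfolding rho_defect_def a_def[symmetric] SA_def SR_def TA_def TR_def \<nu>_def
    by (simp add: abs_mult mult_left_mono)
  also have "\<dots> = rho_defect \<sigma> r * \<nu> * In n a * In n r"
    unfolding Ia Ir by (simp add: mult_ac)
  finally show ?thesis unfolding \<nu>_def .
qed

lemma abs_rho_le_defect:
  assumes "0 < \<sigma>" "0 < r" "r \<le> 1" "r / sqrt \<sigma> \<le> 1"
  shows "\<bar>rho \<sigma> r n\<bar> \<le> rho_defect \<sigma> r * rho_scale r n"
proof (rule abs_rho_le[OF assms(1-3)])
  define a where "a = r / sqrt \<sigma>"
  define \<nu> where "\<nu> = real n + 1/2"
  define \<epsilon> where "\<epsilon> = rho_defect \<sigma> r"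
  define m where "m = rho_scale r n"
  have a: "0 < a" unfolding a_def using assms by simp
  have \<nu>: "0 \<le> \<nu>" unfolding \<nu>_def by simp
  have \<epsilon>: "0 \<le> \<epsilon>" unfolding \<epsilon>_def by (rule rho_defect_nonneg)
  have m: "0 \<le> m" unfolding m_def using assms by (simp add: rho_scale_nonneg)
  have Ia: "0 \<le> \<epsilon> * In n a" using \<epsilon> besselI_pos[OF a, of "real n + 1/2"] by simp
  have "\<nu> * In n r \<le> \<nu>/r * In n r"
    using mult_left_le[OF assms(3), of "\<nu> * In n r"] assms(2) \<nu>
      besselI_pos[OF assms(2), of "real n + 1/2"]
    by (simp add: field_simps \<nu>_def)
  also have "\<dots> \<le> \<nu>/r * (m * Kn n r)"
    using besselI_le_rho_scale(1)[of r n] assms \<nu> unfolding m_def by (intro mult_left_mono) auto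
  finally have Ir: "\<nu> * In n r \<le> \<nu>/r * (m * Kn n r)" .
  have "\<bar>\<sigma> * dIn n a * In n r - In n a * dIn n r\<bar> \<le> \<epsilon> * In n a * (\<nu> * In n r)"
    using rho_numerator_le_defect[OF assms, of n] unfolding a_def \<epsilon>_def \<nu>_def by (simp add: mult_ac)
  also have "\<dots> \<le> \<epsilon> * m * (In n a * (\<nu>/r * Kn n r))"
    using mult_left_mono[OF Ir Ia] by (simp add: mult_ac)
  also have "\<dots> \<le> \<epsilon> * m * (In n a * - dKn n r)"
    using deriv_besselK_le[of r n] assms besselI_pos[OF a, of \<nu>] \<nu> \<epsilon> m
    unfolding \<nu>_def by (intro mult_left_mono) auto
  also have "\<dots> \<le> \<epsilon> * m * (\<sigma> * dIn n a * Kn n r - In n a * dKn n r)"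
    using rho_denominator_ge(2)[OF assms(1-3), of n] \<epsilon> m unfolding a_def
    by (intro mult_left_mono) auto
  finally show "\<bar>\<sigma> * dIn n a * In n r - In n a * dIn n r\<bar>
      \<le> \<epsilon> * m * (\<sigma> * dIn n a * Kn n r - In n a * dKn n r)" .
qed

lemma quotient_perturbation_le:
  fixes p K dK I dI \<nu> \<tau> :: real
  assumes \<nu>: "1/2 \<le> \<nu>" and K: "0 < K" and dI: "0 < dI" and I: "0 \<le> I" "\<nu> * I \<le> dI"
    and dK: "0 \<le> - dK" "- dK \<le> 3 * \<nu> * K"
    and \<tau>: "\<tau> \<le> 1/6" and p: "\<bar>p\<bar> * (\<nu> * K) \<le> \<tau> * dI"
  shows "\<bar>(p * K - I) / (p * dK - dI) - I / dI\<bar> \<le> 16 * \<tau>"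
proof -
  have "0 \<le> \<bar>p\<bar> * (\<nu> * K)" using \<nu> K by simp
  then have "0 \<le> \<tau> * dI" using p by linarith
  then have \<tau>0: "0 \<le> \<tau>" using dI by (simp add: zero_le_mult_iff)
  have "\<bar>p * dK\<bar> = \<bar>p\<bar> * - dK"
    using dK by (simp add: abs_mult)
  also have "\<dots> \<le> 3 * (\<bar>p\<bar> * (\<nu> * K))"
    using dK mult_left_mono[OF dK(2) abs_ge_zero[of p]] by (simp add: mult_ac)
  also have "\<dots> \<le> 3 * (1/6 * dI)"
    using p mult_right_mono[OF \<tau> less_imp_le[OF dI]] by simp
  finally have den: "dI / 2 \<le> \<bar>p * dK - dI\<bar>" by linarith
  have "I * - dK \<le> I * (3 * \<nu> * K)" using dK I by (intro mult_left_mono) auto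
  also have "\<dots> \<le> 3 * K * dI" using I K by (simp add: mult_ac mult_left_mono)
  moreover have "0 \<le> I * - dK" "0 \<le> K * dI"
    using I dK K dI by (intro mult_nonneg_nonneg; simp)+
  ultimately have num: "\<bar>K * dI - I * dK\<bar> \<le> 4 * K * dI" by (simp add: abs_le_iff)
  have "p * dK - dI \<noteq> 0" using den dI by auto
  then have "(p * K - I) / (p * dK - dI) - I / dI = p * (K * dI - I * dK) / ((p * dK - dI) * dI)"
    using dI by (simp add: field_simps)
  then have "\<bar>(p * K - I) / (p * dK - dI) - I / dI\<bar>
      = \<bar>p\<bar> * \<bar>K * dI - I * dK\<bar> / (\<bar>p * dK - dI\<bar> * dI)"
    using dI by (simp add: abs_mult abs_div)
  also have "\<dots> \<le> \<bar>p\<bar> * (4 * K * dI) / (dI / 2 * dI)"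
    using den num dI by (intro frac_le mult_left_mono mult_right_mono) auto
  also have "\<dots> = 8 * (\<bar>p\<bar> * (\<nu> * K)) / (\<nu> * dI)"
    using dI \<nu> by (simp add: field_simps)
  also have "\<dots> \<le> 8 * (\<tau> * dI) / (\<nu> * dI)"
    using p dI \<nu> by (intro divide_right_mono) auto
  also have "\<dots> \<le> 16 * \<tau>"
    using dI \<nu> mult_right_mono[of 1 "2 * \<nu>" \<tau>] \<tau>0 by (simp add: field_simps)
  finally show ?thesis .
qed

lemma abs_diff_mult_le:
  assumes \<tau>: "\<tau> \<le> 1/6"
    and \<rho>: "\<bar>rho \<sigma> r n\<bar> \<le> \<tau> * dIn n 1 / ((real n + 1/2) * Kn n 1)"
  shows "\<bar>diff_mult \<sigma> r n\<bar> \<le> 16 * \<tau>"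
proof -
  define \<nu> where "\<nu> = real n + 1/2"
  have \<nu>: "1/2 \<le> \<nu>" unfolding \<nu>_def by simp
  have K: "0 < Kn n 1" by (rule besselK_pos) auto
  have "\<nu> * Kn n 1 \<le> - dKn n 1" "- dKn n 1 \<le> (\<nu> + 1) * Kn n 1"
    using deriv_besselK_le[of 1 n] deriv_besselK_ge_at_1[of n] unfolding \<nu>_def
    by (simp_all add: algebra_simps)
  moreover have "(\<nu> + 1) * Kn n 1 \<le> 3 * \<nu> * Kn n 1" "0 \<le> \<nu> * Kn n 1" using \<nu> K by simp_all
  ultimately have dK: "0 \<le> - dKn n 1" "- dKn n 1 \<le> 3 * \<nu> * Kn n 1"
    by linarith+
  show ?thesis
    unfolding diff_mult_def mult_cs_def mult_hom_def
  proof (rule quotient_perturbation_le[OF \<nu> K _ _ _ dK \<tau>])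
    show "0 < dIn n 1" "0 \<le> In n 1" "\<nu> * In n 1 \<le> dIn n 1"
      using deriv_besselI_pos[of 1 \<nu>] besselI_pos[of 1 \<nu>] deriv_besselI_ge[of 1 \<nu>] \<nu>
      unfolding \<nu>_def by simp_all
    show "\<bar>rho \<sigma> r n\<bar> * (\<nu> * Kn n 1) \<le> \<tau> * dIn n 1"
      using \<rho> K \<nu> unfolding \<nu>_def by (simp add: le_divide_eq)
  qed
qed

lemma weighted_power_le: "0 \<le> q \<Longrightarrow> q < 1 \<Longrightarrow> (real n + 1) * q ^ n \<le> 1 / (1 - (q::real))"
proof -
  assume q: "0 \<le> q" "q < 1"
  have "(real n + 1) * q ^ n = (\<Sum>i<Suc n. q ^ n)" by simp
  also have "\<dots> \<le> (\<Sum>i<Suc n. q ^ i)"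
    using q by (intro sum_mono power_decreasing) auto
  also have "\<dots> = (1 - q ^ Suc n) / (1 - q)"
    using q by (simp only: sum_gp_strict) simp
  also have "\<dots> \<le> 1 / (1 - q)"
    using q by (intro divide_right_mono) auto
  finally show ?thesis .
qed

lemma diff_mult_weighted_le:
  assumes r: "0 < r" "r < 1" and t: "0 \<le> t" "t * r \<le> 1/6"
    and \<rho>: "\<bar>rho \<sigma> r n\<bar> \<le> t * rho_scale r n"
  shows "\<bar>diff_mult \<sigma> r n\<bar> * (real n + 1) \<le> 16 * t * r / (1 - r\<^sup>2)"
proof -
  have q: "0 \<le> r\<^sup>2" "r\<^sup>2 < 1" using r by (simp_all add: power_less_one_iff abs_less_iff)
  have pow: "r ^ (2*n + 1) = r * (r\<^sup>2) ^ n" by (simp add: power_mult)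
  have "r ^ (2*n + 1) \<le> r" using r by (simp add: pow mult_left_le power_le_one)
  then have "t * r ^ (2*n + 1) \<le> 1/6" using t by (meson mult_left_mono order_trans)
  then have "\<bar>diff_mult \<sigma> r n\<bar> \<le> 16 * (t * r ^ (2*n + 1))"
    using t r \<rho> by (intro abs_diff_mult_le) (auto simp: rho_scale_def)
  then have "\<bar>diff_mult \<sigma> r n\<bar> * (real n + 1) \<le> 16 * t * r * ((real n + 1) * (r\<^sup>2) ^ n)"
    unfolding pow by (simp add: mult_right_mono mult_ac)
  also have "\<dots> \<le> 16 * t * r * (1 / (1 - r\<^sup>2))"
    using weighted_power_le[OF q, of n] t r by (intro mult_left_mono) auto
  finally show ?thesis by simp
qed

section \<open>Diagonal operators from H^(-1/2) to H^(1/2)\<close>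

lemma Hnorm_nonneg: "0 \<le> Hnorm s c"
  unfolding Hnorm_def by (intro real_sqrt_ge_zero infsum_nonneg) (auto simp: sob_weight_def)

lemma sob_weight_half_le: "sob_weight (1/2) n \<le> (real n + 1)\<^sup>2 * sob_weight (-1/2) n"
proof -
  define w where "w = 1 + real n * (real n + 1)"
  have w: "0 < w" "w \<le> (real n + 1)\<^sup>2"
    unfolding w_def by (simp_all add: add_pos_nonneg power2_eq_square algebra_simps)
  have "sob_weight (1/2) n = w * sob_weight (-1/2) n"
    using w unfolding sob_weight_def w_def[symmetric]
    by (simp add: powr_minus_divide powr_half_sqrt divide_simps)
  also have "\<dots> \<le> (real n + 1)\<^sup>2 * sob_weight (-1/2) n"
    using w by (intro mult_right_mono) (auto simp: sob_weight_def)
  finally show ?thesis .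
qed

lemma Hnorm_mult_op_le:
  assumes B: "\<And>n. \<bar>lam n\<bar> * (real n + 1) \<le> B" and c: "inH (-1/2) c"
  shows "inH (1/2) (mult_op lam c)" and "Hnorm (1/2) (mult_op lam c) \<le> B * Hnorm (-1/2) c"
proof -
  define f where "f = (\<lambda>(n, m). sob_weight (-1/2) n * (cmod (c n m))\<^sup>2)"
  define g where "g = (\<lambda>(n, m). sob_weight (1/2) n * (cmod (mult_op lam c n m))\<^sup>2)"
  have B0: "0 \<le> B" using B[of 0] abs_ge_zero[of "lam 0"] by simp
  have f: "f summable_on sh_idx" using c unfolding inH_def f_def .
  have gf: "g x \<le> B\<^sup>2 * f x" for x
  proof (cases x)
    case (Pair n m)
    have "(\<bar>lam n\<bar> * (real n + 1))\<^sup>2 \<le> B\<^sup>2"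
      using B[of n] by (intro power_mono) auto
    moreover have "0 \<le> sob_weight (-1/2) n" by (simp add: sob_weight_def)
    ultimately have "(lam n)\<^sup>2 * ((real n + 1)\<^sup>2 * sob_weight (-1/2) n) \<le> B\<^sup>2 * sob_weight (-1/2) n"
      by (simp add: power_mult_distrib mult_right_mono flip: mult.assoc)
    then have "sob_weight (1/2) n * (lam n)\<^sup>2 \<le> B\<^sup>2 * sob_weight (-1/2) n"
      using mult_left_mono[OF sob_weight_half_le[of n], of "(lam n)\<^sup>2"] by (simp add: mult_ac)
    then have "sob_weight (1/2) n * (lam n)\<^sup>2 * (cmod (c n m))\<^sup>2
        \<le> B\<^sup>2 * sob_weight (-1/2) n * (cmod (c n m))\<^sup>2"
      by (rule mult_right_mono) simp
    then show ?thesis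
      unfolding Pair f_def g_def mult_op_def by (simp add: norm_mult power_mult_distrib mult_ac)
  qed
  have g0: "0 \<le> g x" for x by (auto simp: g_def sob_weight_def split: prod.split)
  have g: "g summable_on sh_idx"
    by (rule summable_on_comparison_test[OF summable_on_cmult_right[OF f]]) (use gf g0 in auto)
  then show "inH (1/2) (mult_op lam c)" unfolding inH_def g_def .
  have "infsum g sh_idx \<le> B\<^sup>2 * infsum f sh_idx"
    using infsum_mono[OF g summable_on_cmult_right[OF f] gf] by (simp add: infsum_cmult_right[OF f])
  then have "sqrt (infsum g sh_idx) \<le> B * sqrt (infsum f sh_idx)"
    using B0 real_sqrt_le_mono by (fastforce simp: real_sqrt_mult)
  then show "Hnorm (1/2) (mult_op lam c) \<le> B * Hnorm (-1/2) c"
    unfolding Hnorm_def f_def g_def .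
qed

lemma multiplier_op_norm_le:
  assumes B: "\<And>n. \<bar>lam n\<bar> * (real n + 1) \<le> B"
  shows "bounded_op lam" and "0 \<le> op_norm lam" and "op_norm lam \<le> B"
proof -
  show "bounded_op lam"
    unfolding bounded_op_def using Hnorm_mult_op_le[OF B] by blast
  define C where "C = {c. inH (-1/2) c \<and> Hnorm (-1/2) c \<noteq> 0}"
  define Q where "Q = (\<lambda>c. Hnorm (1/2) (mult_op lam c) / Hnorm (-1/2) c)"
  have QB: "Q c \<le> B" if "c \<in> C" for c
    using that Hnorm_mult_op_le(2)[OF B] Hnorm_nonneg[of "-1/2" c]
    unfolding C_def Q_def by (auto simp: divide_le_eq)
  txt \<open>The constant harmonic e shows that op_norm is a supremum over a nonempty set.\<close>
  define e :: "nat \<Rightarrow> int \<Rightarrow> complex" where "e = (\<lambda>n m. if n = 0 \<and> m = 0 then 1 else 0)"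
  have "((\<lambda>(n, m). sob_weight (-1/2) n * (cmod (e n m))\<^sup>2) has_sum 1) sh_idx"
    by (rule has_sum_finite_neutralI[of "{(0, 0)}"])
      (auto simp: sh_idx_def e_def sob_weight_def split: if_splits)
  then have e: "e \<in> C"
    unfolding C_def inH_def Hnorm_def by (simp add: has_sum_imp_summable infsumI)
  have "bdd_above (Q ` C)" using QB by (intro bdd_aboveI2) auto
  then have "Q e \<le> op_norm lam"
    unfolding op_norm_def C_def[symmetric] Q_def[symmetric] by (rule cSUP_upper[OF e])
  moreover have "0 \<le> Q e" unfolding Q_def by (simp add: Hnorm_nonneg)
  ultimately show "0 \<le> op_norm lam" by linarith
  show "op_norm lam \<le> B"
    unfolding op_norm_def C_def[symmetric] Q_def[symmetric] using e QB by (intro cSUP_least) auto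
qed

lemma op_norm_tendsto_0:
  assumes "\<forall>\<^sub>F x in F. \<forall>n. \<bar>L x n\<bar> * (real n + 1) \<le> g x" and "(g \<longlongrightarrow> 0) F"
  shows "(\<forall>\<^sub>F x in F. bounded_op (L x)) \<and> ((\<lambda>x. op_norm (L x)) \<longlongrightarrow> 0) F"
proof
  show "\<forall>\<^sub>F x in F. bounded_op (L x)"
    using assms(1) by eventually_elim (use multiplier_op_norm_le(1) in blast)
  show "((\<lambda>x. op_norm (L x)) \<longlongrightarrow> 0) F"
  proof (rule tendsto_sandwich[OF _ _ tendsto_const assms(2)])
    show "\<forall>\<^sub>F x in F. 0 \<le> op_norm (L x)"
      using assms(1) by eventually_elim (use multiplier_op_norm_le(2) in blast)
    show "\<forall>\<^sub>F x in F. op_norm (L x) \<le> g x"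
      using assms(1) by eventually_elim (use multiplier_op_norm_le(3) in blast)
  qed
qed

section \<open>Convergence of the Neumann-to-Dirichlet maps\<close>

lemma diff_mult_tendsto_sigma_1:
  assumes r: "0 < r" "r < 1"
  shows "(\<forall>\<^sub>F \<sigma> in at 1 within {0<..}. bounded_op (diff_mult \<sigma> r)) \<and>
    ((\<lambda>\<sigma>. op_norm (diff_mult \<sigma> r)) \<longlongrightarrow> 0) (at 1 within {0<..})"
proof (rule op_norm_tendsto_0)
  let ?F = "at (1::real) within {0<..}"
  have "((\<lambda>\<sigma>. rho_defect \<sigma> r) \<longlongrightarrow> rho_defect 1 r) ?F"
    unfolding rho_defect_def using r by (intro tendsto_intros) auto
  then have defect: "((\<lambda>\<sigma>. rho_defect \<sigma> r) \<longlongrightarrow> 0) ?F"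
    by (simp add: rho_defect_def)
  have "((\<lambda>\<sigma>. r / sqrt \<sigma>) \<longlongrightarrow> r / sqrt 1) ?F"
    by (intro tendsto_intros) auto
  then have "\<forall>\<^sub>F \<sigma> in ?F. r / sqrt \<sigma> < 1"
    using order_tendstoD(2)[of _ r _ 1] r by simp
  moreover have "\<forall>\<^sub>F \<sigma> in ?F. rho_defect \<sigma> r < 1/6"
    using order_tendstoD(2)[OF defect, of "1/6"] by simp
  moreover have "\<forall>\<^sub>F \<sigma> in ?F. 0 < \<sigma>"
    by (simp add: eventually_at_filter)
  ultimately show "\<forall>\<^sub>F \<sigma> in ?F. \<forall>n.
      \<bar>diff_mult \<sigma> r n\<bar> * (real n + 1) \<le> 16 * rho_defect \<sigma> r * r / (1 - r\<^sup>2)"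
  proof eventually_elim
    case (elim \<sigma>)
    have "rho_defect \<sigma> r * r \<le> 1/6"
      using elim rho_defect_nonneg[of \<sigma> r] r mult_left_le[of r "rho_defect \<sigma> r"] by simp
    then show ?case
      using elim r rho_defect_nonneg
      by (intro allI diff_mult_weighted_le abs_rho_le_defect) auto
  qed
  show "((\<lambda>\<sigma>. 16 * rho_defect \<sigma> r * r / (1 - r\<^sup>2)) \<longlongrightarrow> 0) ?F"
    using tendsto_mult_right_zero[OF tendsto_mult_left_zero[OF defect], of "r / (1 - r\<^sup>2)" 16]
    by (simp add: mult_ac)
qed

lemma diff_mult_tendsto_radius_0:
  assumes "0 < \<sigma>"
  shows "(\<forall>\<^sub>F r in at_right 0. bounded_op (diff_mult \<sigma> r)) \<and>
    ((\<lambda>r. op_norm (diff_mult \<sigma> r)) \<longlongrightarrow> 0) (at_right 0)"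
proof (rule op_norm_tendsto_0)
  have "\<forall>\<^sub>F r in at_right 0. 0 < r \<and> r < (1/6::real)"
    unfolding eventually_at_right_field by (intro exI[of _ "1/6"]) auto
  then show "\<forall>\<^sub>F r in at_right 0. \<forall>n. \<bar>diff_mult \<sigma> r n\<bar> * (real n + 1) \<le> 16 * r / (1 - r\<^sup>2)"
  proof eventually_elim
    case (elim r)
    then show ?case
      using diff_mult_weighted_le[of r 1 \<sigma>] abs_rho_le_rho_scale[OF assms, of r] by simp
  qed
  have "((\<lambda>r. 16 * r / (1 - r\<^sup>2)) \<longlongrightarrow> 16 * 0 / (1 - 0\<^sup>2)) (at_right (0::real))"
    by (intro tendsto_intros) auto
  then show "((\<lambda>r. 16 * r / (1 - r\<^sup>2)) \<longlongrightarrow> 0) (at_right (0::real))"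
    by simp
qed

theorem theorem3p1:
  shows "(\<forall>r1. 0 < r1 \<and> r1 < 1 \<longrightarrow>
            (\<forall>\<^sub>F \<sigma>1 in at 1 within {0<..}. bounded_op (diff_mult \<sigma>1 r1)) \<and>
            ((\<lambda>\<sigma>1. op_norm (diff_mult \<sigma>1 r1)) \<longlongrightarrow> 0) (at 1 within {0<..}))
       \<and> (\<forall>\<sigma>1. 0 < \<sigma>1 \<longrightarrow>
            (\<forall>\<^sub>F r1 in at_right 0. bounded_op (diff_mult \<sigma>1 r1)) \<and>
            ((\<lambda>r1. op_norm (diff_mult \<sigma>1 r1)) \<longlongrightarrow> 0) (at_right 0))"
  using diff_mult_tendsto_sigma_1 diff_mult_tendsto_radius_0 by blast

end
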